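(* Let $G$ be a connected graph with infinitely many nodes such that ${}^{*}G$ has a hypernode not in its principal galaxy $\Gamma_0$. Let $\Gamma_a,\Gamma_b,\Gamma_c$ be galaxies of ${}^{*}G$ different from $\Gamma_0$. If $\Gamma_a$ is closer to $\Gamma_0$ than is $\Gamma_b$, and $\Gamma_b$ is closer to $\Gamma_0$ than is $\Gamma_c$, then $\Gamma_a$ is closer to $\Gamma_0$ than is $\Gamma_c$. Thus the set of galaxies is partially ordered according to closeness to $\Gamma_0$.
   Context: Conventions. $G=\{X,B\}$ is a graph whose branches are two-element subsets of $X$, and $d$ is the graph distance. Fix a free ultrafilter $\mathcal F$ on $\mathbb N$. Hypernodes and enlargement. Hypernodes are classes $[x_n]$ of node sequences, with two sequences identified when they agree on a set in $\mathcal F$. A standard hypernode is the class of a constant sequence. ${}^{*}G$ consists of the hypernodes and the hyperbranches $[\{x_n,y_n\}]$ with $\{n:\{x_n,y_n\}\in B\}\in\mathcal F$. Galaxies. Hypernodes $[x_n]$ and $[y_n]$ are limitedly distant if $\{n:d(x_n,y_n)\le k\}\in\mathcal F$ for some $k\in\mathbb N$. Galaxies are the classes of this equivalence relation, together with the hyperbranches between their hypernodes. The principal galaxy $\Gamma_0$ contains the standard hypernodes. Closeness. For galaxies $\Gamma_a,\Gamma_b\ne\Gamma_0$, $\Gamma_a$ is closer to $\Gamma_0$ than is $\Gamma_b$ if there exist ${\bf y}=[y_n]\in\Gamma_a$, ${\bf z}=[z_n]\in\Gamma_b$ and ${\bf x}=[x_n]\in\Gamma_0$ such that for every $m\in\mathbb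 N$, $\{n: d(z_n,x_n)-d(y_n,x_n)\ge m\}\in\mathcal F$. *)

theory Defs
  imports Main
begin

definition is_graph :: "'a set \<Rightarrow> 'a set set \<Rightarrow> bool" where
  "is_graph X B \<longleftrightarrow> (\<forall>e\<in>B. \<exists>u v. e = {u, v} \<and> u \<noteq> v \<and> u \<in> X \<and> v \<in> X)"

text \<open>A walk of length k from u to v: a list of k+1 nodes, consecutive ones joined by a branch.\<close>
definition is_walk :: "'a set \<Rightarrow> 'a set set \<Rightarrow> 'a list \<Rightarrow> 'a \<Rightarrow> 'a \<Rightarrow> bool" where
  "is_walk X B p u v \<longleftrightarrow> p \<noteq> [] \<and> hd p = u \<and> last p = v \<and> set p \<subseteq> X \<and>
     (\<forall>i. Suc i < length p \<longrightarrow> {p ! i, p ! Suc i} \<in> B)"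

definition connected_graph :: "'a set \<Rightarrow> 'a set set \<Rightarrow> bool" where
  "connected_graph X B \<longleftrightarrow> (\<forall>u\<in>X. \<forall>v\<in>X. \<exists>p. is_walk X B p u v)"

definition gdist :: "'a set \<Rightarrow> 'a set set \<Rightarrow> 'a \<Rightarrow> 'a \<Rightarrow> nat" where
  "gdist X B u v = (LEAST k. \<exists>p. is_walk X B p u v \<and> length p = Suc k)"

definition free_ultrafilter :: "nat filter \<Rightarrow> bool" where
  "free_ultrafilter F \<longleftrightarrow> F \<noteq> bot \<and> (\<forall>P. eventually P F \<or> eventually (\<lambda>n. \<not> P n) F)
     \<and> F \<le> cofinite"

text \<open>Representatives of hypernodes: sequences of nodes (hypernodes are their classes
  modulo F-a.e. equality; all notions below respect that equivalence).\<close>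
definition node_seq :: "'a set \<Rightarrow> (nat \<Rightarrow> 'a) \<Rightarrow> bool" where
  "node_seq X x \<longleftrightarrow> (\<forall>n. x n \<in> X)"

definition limitedly_distant ::
  "'a set \<Rightarrow> 'a set set \<Rightarrow> nat filter \<Rightarrow> (nat \<Rightarrow> 'a) \<Rightarrow> (nat \<Rightarrow> 'a) \<Rightarrow> bool" where
  "limitedly_distant X B F x y \<longleftrightarrow> (\<exists>k::nat. eventually (\<lambda>n. gdist X B (x n) (y n) \<le> k) F)"

text \<open>The galaxy of the hypernode [x], as the set of representatives of its hypernodes.\<close>
definition galaxy :: "'a set \<Rightarrow> 'a set set \<Rightarrow> nat filter \<Rightarrow> (nat \<Rightarrow> 'a) \<Rightarrow> (nat \<Rightarrow> 'a) set" where
  "galaxy X B F x = {y. node_seq X y \<and> limitedly_distant X B F x y}"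

definition galaxies :: "'a set \<Rightarrow> 'a set set \<Rightarrow> nat filter \<Rightarrow> (nat \<Rightarrow> 'a) set set" where
  "galaxies X B F = {galaxy X B F x | x. node_seq X x}"

text \<open>Principal galaxy: the galaxy containing the standard hypernodes.\<close>
definition principal_galaxy :: "'a set \<Rightarrow> 'a set set \<Rightarrow> nat filter \<Rightarrow> (nat \<Rightarrow> 'a) set" where
  "principal_galaxy X B F = {y. node_seq X y \<and> (\<exists>c\<in>X. limitedly_distant X B F (\<lambda>_. c) y)}"

definition closer :: "'a set \<Rightarrow> 'a set set \<Rightarrow> nat filter \<Rightarrow> (nat \<Rightarrow> 'a) set \<Rightarrow> (nat \<Rightarrow> 'a) set \<Rightarrow> bool" where
  "closer X B F Ga Gb \<longleftrightarrow> (\<exists>y\<in>Ga. \<exists>z\<in>Gb. \<exists>x\<in>principal_galaxy X B F.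
     \<forall>m::nat. eventually (\<lambda>n. int (gdist X B (z n) (x n)) - int (gdist X B (y n) (x n)) \<ge> int m) F)"

end

theory Submission
  imports Defs
begin

text \<open>Writing \<open>gap(z,y,x)\<close> for
  \<open>d(z,x) - d(y,x)\<close>, the triangle inequality gives
  \<open>gap(z',y,x) \<ge> gap(z',y',x') + gap(z,y,x) - d(y',z) - 2 d(x,x')\<close>. When \<open>z\<close>, \<open>y'\<close> lie in one
  galaxy and \<open>x\<close>, \<open>x'\<close> in the principal galaxy, both subtracted distances are limited, so
  \<open>gap(z',y,x)\<close> is unlimited whenever the other two gaps are.\<close>

lemma is_walk_Cons_Cons:
  "is_walk X B (a # b # q) u v \<longleftrightarrow> a = u \<and> a \<in> X \<and> {a, b} \<in> B \<and> is_walk X B (b # q) b v"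
proof
  assume "is_walk X B (a # b # q) u v"
  then show "a = u \<and> a \<in> X \<and> {a, b} \<in> B \<and> is_walk X B (b # q) b v"
    unfolding is_walk_def by auto
next
  assume walk: "a = u \<and> a \<in> X \<and> {a, b} \<in> B \<and> is_walk X B (b # q) b v"
  show "is_walk X B (a # b # q) u v"
    unfolding is_walk_def
  proof (intro conjI allI impI)
    fix i assume "Suc i < length (a # b # q)"
    with walk show "{(a # b # q) ! i, (a # b # q) ! Suc i} \<in> B"
      by (cases i) (auto simp: is_walk_def)
  qed (use walk in \<open>auto simp: is_walk_def\<close>)
qed

lemma is_walk_append:
  assumes "is_walk X B p u v" and "is_walk X B q v w"
  shows "is_walk X B (p @ tl q) u w"
  using assms
proof (induction p arbitrary: u)
  case Nil
  then show ?case by (simp add: is_walk_def)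
next
  case (Cons a p)
  show ?case
  proof (cases p)
    case Nil
    with Cons.prems show ?thesis
      by (cases q) (auto simp: is_walk_def)
  next
    case (Cons b r)
    with Cons.prems(1) have "a = u" "a \<in> X" "{a, b} \<in> B" "is_walk X B p b v"
      by (auto simp: is_walk_Cons_Cons)
    with Cons.IH Cons.prems(2) \<open>p = b # r\<close> show ?thesis
      by (simp add: is_walk_Cons_Cons)
  qed
qed

lemma is_walk_rev:
  assumes "is_walk X B p u v"
  shows "is_walk X B (rev p) v u"
  unfolding is_walk_def
proof (intro conjI allI impI)
  fix i assume i: "Suc i < length (rev p)"
  define j where "j = length p - Suc (Suc i)"
  have "{p ! j, p ! Suc j} \<in> B"
    using assms i unfolding is_walk_def j_def by auto
  moreover have "rev p ! i = p ! Suc j" "rev p ! Suc i = p ! j"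
    using i by (auto simp: rev_nth j_def Suc_diff_Suc)
  ultimately show "{rev p ! i, rev p ! Suc i} \<in> B"
    by (simp add: insert_commute)
qed (use assms in \<open>auto simp: is_walk_def hd_rev last_rev\<close>)

lemma gdist_less_length:
  assumes "is_walk X B p u v"
  shows "gdist X B u v < length p"
proof -
  have len: "length p = Suc (length p - 1)"
    using assms by (simp add: is_walk_def)
  with assms have "gdist X B u v \<le> length p - 1"
    unfolding gdist_def by (intro Least_le) blast
  with len show ?thesis
    by linarith
qed

lemma shortest_walk_exists:
  assumes "connected_graph X B" and "u \<in> X" and "v \<in> X"
  obtains p where "is_walk X B p u v" and "length p = Suc (gdist X B u v)"
proof -
  obtain p where "is_walk X B p u v"
    using assms unfolding connected_graph_def by blast
  then have "\<exists>k p. is_walk X B p u v \<and> length p = Suc k"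
    by (intro exI[of _ "length p - 1"] exI[of _ p]) (auto simp: is_walk_def)
  then have "\<exists>p. is_walk X B p u v \<and> length p = Suc (gdist X B u v)"
    unfolding gdist_def by (rule LeastI_ex)
  with that show ?thesis
    by blast
qed

lemma gdist_triangle:
  assumes "connected_graph X B" and "u \<in> X" and "v \<in> X" and "w \<in> X"
  shows "gdist X B u w \<le> gdist X B u v + gdist X B v w"
proof -
  obtain p where p: "is_walk X B p u v" "length p = Suc (gdist X B u v)"
    using shortest_walk_exists assms by metis
  obtain q where q: "is_walk X B q v w" "length q = Suc (gdist X B v w)"
    using shortest_walk_exists assms by metis
  from gdist_less_length[OF is_walk_append[OF p(1) q(1)]] p q show ?thesis
    by simp
qed

lemma gdist_commute:
  assumes "connected_graph X B" and "u \<in> X" and "v \<in> X"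
  shows "gdist X B u v = gdist X B v u"
proof -
  have "gdist X B a b \<le> gdist X B b a" if "a \<in> X" "b \<in> X" for a b
  proof -
    obtain p where "is_walk X B p b a" "length p = Suc (gdist X B b a)"
      using shortest_walk_exists[OF assms(1) \<open>b \<in> X\<close> \<open>a \<in> X\<close>] .
    with gdist_less_length[OF is_walk_rev] show ?thesis
      by fastforce
  qed
  with assms show ?thesis
    by (simp add: le_antisym)
qed

lemma gdist_gap_chain:
  assumes "connected_graph X B"
    and "x \<in> X" "x' \<in> X" "y \<in> X" "y' \<in> X" "z \<in> X" "z' \<in> X"
  shows "int (gdist X B z' x') - int (gdist X B y' x') + (int (gdist X B z x) - int (gdist X B y x))
           - int (gdist X B y' z) - 2 * int (gdist X B x x')
         \<le> int (gdist X B z' x) - int (gdist X B y x)"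
proof -
  note tri = gdist_triangle[OF assms(1)] and sym = gdist_commute[OF assms(1)]
  have "gdist X B z' x' \<le> gdist X B z' x + gdist X B x x'"
    using tri assms by blast
  moreover have "gdist X B y' x \<le> gdist X B y' x' + gdist X B x x'"
    using tri[of y' x' x] sym[of x' x] assms by simp
  moreover have "gdist X B z x \<le> gdist X B y' z + gdist X B y' x"
    using tri[of z y' x] sym[of z y'] assms by simp
  ultimately show ?thesis
    by linarith
qed

lemma limitedly_distant_trans:
  assumes "connected_graph X B" and "node_seq X x" "node_seq X y" "node_seq X z"
    and "limitedly_distant X B F x y" and "limitedly_distant X B F y z"
  shows "limitedly_distant X B F x z"
proof -
  obtain k l where "eventually (\<lambda>n. gdist X B (x n) (y n) \<le> k) F"
    and "eventually (\<lambda>n. gdist X B (y n) (z n) \<le> l) F"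
    using assms(5,6) unfolding limitedly_distant_def by blast
  then have "eventually (\<lambda>n. gdist X B (x n) (z n) \<le> k + l) F"
  proof eventually_elim
    case (elim n)
    with gdist_triangle[OF assms(1), of "x n" "y n" "z n"] assms(2-4) show ?case
      by (simp add: node_seq_def)
  qed
  then show ?thesis
    unfolding limitedly_distant_def by blast
qed

lemma limitedly_distant_sym:
  assumes "connected_graph X B" and "node_seq X x" "node_seq X y"
    and "limitedly_distant X B F x y"
  shows "limitedly_distant X B F y x"
proof -
  obtain k where "eventually (\<lambda>n. gdist X B (x n) (y n) \<le> k) F"
    using assms(4) unfolding limitedly_distant_def by blast
  then have "eventually (\<lambda>n. gdist X B (y n) (x n) \<le> k) F"
    by (rule eventually_mono) (use assms(1-3) gdist_commute in \<open>fastforce simp: node_seq_def\<close>)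
  then show ?thesis
    unfolding limitedly_distant_def by blast
qed

lemma galaxy_limitedly_distant:
  assumes "connected_graph X B" and "G \<in> galaxies X B F" and "y \<in> G" "z \<in> G"
  shows "limitedly_distant X B F y z"
proof -
  obtain w where w: "node_seq X w" "G = galaxy X B F w"
    using assms(2) unfolding galaxies_def by blast
  with assms(3,4) have "node_seq X y" "node_seq X z"
    "limitedly_distant X B F w y" "limitedly_distant X B F w z"
    unfolding galaxy_def by auto
  with w(1) show ?thesis
    using limitedly_distant_trans limitedly_distant_sym assms(1) by metis
qed

lemma principal_galaxy_limitedly_distant:
  assumes "connected_graph X B" and "x \<in> principal_galaxy X B F" "x' \<in> principal_galaxy X B F"
  shows "limitedly_distant X B F x x'"
proof -
  obtain c c' where "c \<in> X" "c' \<in> X" "node_seq X x" "node_seq X x'"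
    and "limitedly_distant X B F (\<lambda>_. c) x" "limitedly_distant X B F (\<lambda>_. c') x'"
    using assms(2,3) unfolding principal_galaxy_def by blast
  moreover have "limitedly_distant X B F (\<lambda>_. c) (\<lambda>_. c')"
    unfolding limitedly_distant_def by (intro exI[of _ "gdist X B c c'"]) simp
  moreover have "node_seq X (\<lambda>_. c)" "node_seq X (\<lambda>_. c')"
    using \<open>c \<in> X\<close> \<open>c' \<in> X\<close> by (simp_all add: node_seq_def)
  ultimately show ?thesis
    using limitedly_distant_trans limitedly_distant_sym assms(1) by metis
qed

definition gap :: "'a set \<Rightarrow> 'a set set \<Rightarrow> (nat \<Rightarrow> 'a) \<Rightarrow> (nat \<Rightarrow> 'a) \<Rightarrow> (nat \<Rightarrow> 'a) \<Rightarrow> nat \<Rightarrow> int"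
  where "gap X B z y x n = int (gdist X B (z n) (x n)) - int (gdist X B (y n) (x n))"

lemma filterlim_int_at_top_iff:
  fixes f :: "'b \<Rightarrow> int"
  shows "filterlim f at_top F \<longleftrightarrow> (\<forall>m::nat. eventually (\<lambda>n. int m \<le> f n) F)"
proof
  assume "filterlim f at_top F"
  then show "\<forall>m::nat. eventually (\<lambda>n. int m \<le> f n) F"
    by (simp add: filterlim_at_top)
next
  assume unlimited: "\<forall>m::nat. eventually (\<lambda>n. int m \<le> f n) F"
  show "filterlim f at_top F"
    unfolding filterlim_at_top
  proof
    fix Z :: int
    from unlimited have "eventually (\<lambda>n. int (nat Z) \<le> f n) F" ..
    then show "eventually (\<lambda>n. Z \<le> f n) F"
      by (rule eventually_mono) linarith
  qed
qed

lemma closer_iff_gap_tendsto_at_top: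
  "closer X B F Ga Gb \<longleftrightarrow>
     (\<exists>y\<in>Ga. \<exists>z\<in>Gb. \<exists>x\<in>principal_galaxy X B F. filterlim (gap X B z y x) at_top F)"
  unfolding closer_def filterlim_int_at_top_iff gap_def by (rule refl)

lemma filterlim_at_top_mono_diff:
  fixes f g :: "'b \<Rightarrow> 'a::linordered_ab_group_add"
  assumes "filterlim f at_top F" and "eventually (\<lambda>x. f x - c \<le> g x) F"
  shows "filterlim g at_top F"
  unfolding filterlim_at_top
proof
  fix Z
  have "eventually (\<lambda>x. Z + c \<le> f x) F"
    using assms(1) by (simp add: filterlim_at_top)
  with assms(2) show "eventually (\<lambda>x. Z \<le> g x) F"
    by eventually_elim (metis add.commute add_le_cancel_right diff_le_eq order_trans)
qed

lemma gap_tendsto_at_top_trans: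
  assumes "connected_graph X B"
    and "node_seq X x" "node_seq X x'" "node_seq X y" "node_seq X y'" "node_seq X z" "node_seq X z'"
    and "limitedly_distant X B F x x'" and "limitedly_distant X B F y' z"
    and gap_Gab: "filterlim (gap X B z y x) at_top F"
    and gap_Gbc: "filterlim (gap X B z' y' x') at_top F"
  shows "filterlim (gap X B z' y x) at_top F"
proof -
  obtain e k where "eventually (\<lambda>n. gdist X B (x n) (x' n) \<le> e) F"
    and "eventually (\<lambda>n. gdist X B (y' n) (z n) \<le> k) F"
    using assms(8,9) unfolding limitedly_distant_def by blast
  moreover have "eventually (\<lambda>n. 0 \<le> gap X B z y x n) F"
    using gap_Gab by (simp add: filterlim_at_top)
  ultimately have "eventually (\<lambda>n. gap X B z' y' x' n - int (k + 2 * e) \<le> gap X B z' y x n) F"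
  proof eventually_elim
    case (elim n)
    from assms(2-7) have "x n \<in> X" "x' n \<in> X" "y n \<in> X" "y' n \<in> X" "z n \<in> X" "z' n \<in> X"
      by (simp_all add: node_seq_def)
    from gdist_gap_chain[OF assms(1) this] elim show ?case
      unfolding gap_def by linarith
  qed
  with gap_Gbc show ?thesis
    by (rule filterlim_at_top_mono_diff)
qed

theorem theorem4p3:
  fixes X :: "'a set" and B :: "'a set set" and F :: "nat filter"
    and Ga Gb Gc :: "(nat \<Rightarrow> 'a) set"
  assumes "is_graph X B" and "connected_graph X B" and "infinite X"
    and "free_ultrafilter F"
    and "\<exists>x. node_seq X x \<and> x \<notin> principal_galaxy X B F"
    and "Ga \<in> galaxies X B F" and "Gb \<in> galaxies X B F" and "Gc \<in> galaxies X B F"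
    and "Ga \<noteq> principal_galaxy X B F" and "Gb \<noteq> principal_galaxy X B F"
    and "Gc \<noteq> principal_galaxy X B F"
    and "closer X B F Ga Gb" and "closer X B F Gb Gc"
  shows "closer X B F Ga Gc"
proof -
  obtain y z x where "y \<in> Ga" "z \<in> Gb" "x \<in> principal_galaxy X B F"
    and gap_Gab: "filterlim (gap X B z y x) at_top F"
    using assms(12) unfolding closer_iff_gap_tendsto_at_top by blast
  obtain y' z' x' where "y' \<in> Gb" "z' \<in> Gc" "x' \<in> principal_galaxy X B F"
    and gap_Gbc: "filterlim (gap X B z' y' x') at_top F"
    using assms(13) unfolding closer_iff_gap_tendsto_at_top by blast
  have "node_seq X x" "node_seq X x'" "node_seq X y" "node_seq X y'" "node_seq X z" "node_seq X z'"
    using \<open>x \<in> _\<close> \<open>x' \<in> _\<close> \<open>y \<in> Ga\<close> \<open>y' \<in> Gb\<close> \<open>z \<in> Gb\<close> \<open>z' \<in> Gc\<close> assms(6-8)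
    unfolding principal_galaxy_def galaxies_def galaxy_def by auto
  moreover have "limitedly_distant X B F x x'"
    using principal_galaxy_limitedly_distant assms(2) \<open>x \<in> _\<close> \<open>x' \<in> _\<close> .
  moreover have "limitedly_distant X B F y' z"
    using galaxy_limitedly_distant assms(2,7) \<open>y' \<in> Gb\<close> \<open>z \<in> Gb\<close> .
  ultimately have "filterlim (gap X B z' y x) at_top F"
    using gap_tendsto_at_top_trans assms(2) gap_Gab gap_Gbc by blast
  with \<open>y \<in> Ga\<close> \<open>z' \<in> Gc\<close> \<open>x \<in> _\<close> show ?thesis
    unfolding closer_iff_gap_tendsto_at_top by blast
qed

end
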